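(* Let $X$ be a minimal shift space over $\mathcal{A}$ such that the extension graph $\mathcal{E}_X(\varepsilon)$ of the empty word is connected. Then $X$ has a bispecial letter, i.e., a letter $a\in\mathcal{A}$ that is both left special and right special.
   Context: A shift space over a finite alphabet $\mathcal{A}$ ($|\mathcal{A}|\ge2$) is a nonempty closed shift-invariant $X\subseteq\mathcal{A}^{\mathbb{Z}}$ whose language $\mathcal{L}(X)$ contains every letter; it is minimal if it has no nonempty proper closed shift-invariant subset. For $w\in\mathcal{L}(X)$, $E^L_X(w)=\{a:aw\in\mathcal{L}(X)\}$, $E^R_X(w)=\{b:wb\in\mathcal{L}(X)\}$; $w$ is left special if $|E^L_X(w)|\ge2$, right special if $|E^R_X(w)|\ge2$. $\mathcal{E}_X(w)$ is the bipartite graph on the disjoint union of $\{a^L:a\in E^L_X(w)\}$ and $\{b^R:b\in E^R_X(w)\}$ with an edge $\{a^L,b^R\}$ whenever $awb\in\mathcal{L}(X)$. *)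

theory Defs
  imports Main
begin

text \<open>Bi-infinite sequences over a finite alphabet 'a (the alphabet is the whole type).\<close>

definition shift :: "(int \<Rightarrow> 'a) \<Rightarrow> (int \<Rightarrow> 'a)" where
  "shift x = (\<lambda>i. x (i + 1))"

text \<open>Closedness in the product topology of discrete topologies, written out via
  central cylinders: the complement is open.\<close>
definition closed_seqs :: "(int \<Rightarrow> 'a) set \<Rightarrow> bool" where
  "closed_seqs X \<longleftrightarrow> (\<forall>x. x \<notin> X \<longrightarrow>
     (\<exists>n::nat. \<forall>y. (\<forall>i. \<bar>i\<bar> \<le> int n \<longrightarrow> y i = x i) \<longrightarrow> y \<notin> X))"

definition shift_invariant :: "(int \<Rightarrow> 'a) set \<Rightarrow> bool" where
  "shift_invariant X \<longleftrightarrow> shift ` X = X"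

definition language :: "(int \<Rightarrow> 'a) set \<Rightarrow> 'a list set" where
  "language X = {w. \<exists>x\<in>X. \<exists>i::int. w = map (\<lambda>k. x (i + int k)) [0..<length w]}"

definition shift_space :: "(int \<Rightarrow> 'a) set \<Rightarrow> bool" where
  "shift_space X \<longleftrightarrow> X \<noteq> {} \<and> closed_seqs X \<and> shift_invariant X
     \<and> (\<forall>a. [a] \<in> language X)"

definition minimal_shift :: "(int \<Rightarrow> 'a) set \<Rightarrow> bool" where
  "minimal_shift X \<longleftrightarrow> shift_space X \<and>
     (\<forall>Y. Y \<subseteq> X \<and> Y \<noteq> {} \<and> closed_seqs Y \<and> shift_invariant Y \<longrightarrow> Y = X)"

definition ext_left :: "(int \<Rightarrow> 'a) set \<Rightarrow> 'a list \<Rightarrow> 'a set" where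
  "ext_left X w = {a. a # w \<in> language X}"

definition ext_right :: "(int \<Rightarrow> 'a) set \<Rightarrow> 'a list \<Rightarrow> 'a set" where
  "ext_right X w = {b. w @ [b] \<in> language X}"

definition left_special :: "(int \<Rightarrow> 'a) set \<Rightarrow> 'a list \<Rightarrow> bool" where
  "left_special X w \<longleftrightarrow> card (ext_left X w) \<ge> 2"

definition right_special :: "(int \<Rightarrow> 'a) set \<Rightarrow> 'a list \<Rightarrow> bool" where
  "right_special X w \<longleftrightarrow> card (ext_right X w) \<ge> 2"

text \<open>Extension graph: vertices Inl a (a left extension) and Inr b (b right extension),
  undirected edges {Inl a, Inr b} whenever a w b is in the language.\<close>
definition ext_graph_vertices :: "(int \<Rightarrow> 'a) set \<Rightarrow> 'a list \<Rightarrow> ('a + 'a) set" where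
  "ext_graph_vertices X w = Inl ` ext_left X w \<union> Inr ` ext_right X w"

definition ext_graph_edges :: "(int \<Rightarrow> 'a) set \<Rightarrow> 'a list \<Rightarrow> ('a + 'a) rel" where
  "ext_graph_edges X w =
     {(Inl a, Inr b) | a b. a # w @ [b] \<in> language X}
   \<union> {(Inr b, Inl a) | a b. a # w @ [b] \<in> language X}"

definition ext_graph_connected :: "(int \<Rightarrow> 'a) set \<Rightarrow> 'a list \<Rightarrow> bool" where
  "ext_graph_connected X w \<longleftrightarrow>
     (\<forall>u\<in>ext_graph_vertices X w. \<forall>v\<in>ext_graph_vertices X w.
        (u, v) \<in> (ext_graph_edges X w)\<^sup>*)"

end

theory Submission
  imports Defs "HOL-Library.Infinite_Set"
begin

text \<open>Suppose no letter is bispecial. Connectedness of the extension graph of the empty word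
  forces, for every two-letter word \<open>ab\<close>, that \<open>a\<close> is right special or \<open>b\<close> is left special.
  Hence the successor of a left special letter, which is not right special, is again left
  special; by minimality (and compactness) the left special letters then exhaust the alphabet,
  so no letter is right special. But on a finite alphabet, if every letter has a unique
  successor then every letter has a unique predecessor, so no letter is left special either.\<close>

lemma two_le_card_iff:
  assumes "finite A"
  shows "2 \<le> card A \<longleftrightarrow> (\<exists>x\<in>A. \<exists>y\<in>A. x \<noteq> y)"
proof
  assume "2 \<le> card A"
  then obtain x B where "A = insert x B" "x \<notin> B" "1 \<le> card B"
    by (auto simp: numeral_2_eq_2 card_le_Suc_iff)
  then show "\<exists>x\<in>A. \<exists>y\<in>A. x \<noteq> y"
    by (metis card.empty ex_in_conv insertCI not_one_le_zero)
next
  assume "\<exists>x\<in>A. \<exists>y\<in>A. x \<noteq> y"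
  then obtain x y where "x \<in> A" "y \<in> A" "x \<noteq> y" by blast
  then have "card {x, y} \<le> card A" using assms by (intro card_mono) auto
  then show "2 \<le> card A" using \<open>x \<noteq> y\<close> by simp
qed

lemma infinite_subset_constant:
  fixes f :: "nat \<Rightarrow> 'b::finite"
  assumes "infinite K"
  obtains K' c where "K' \<subseteq> K" "infinite K'" "\<forall>k\<in>K'. f k = c"
proof -
  obtain k0 where "infinite {k\<in>K. f k = f k0}"
    using pigeonhole_infinite[OF assms, of f] by auto
  then show ?thesis using that[of "{k\<in>K. f k = f k0}"] by blast
qed

text \<open>Compactness of the full shift, by nested pigeonholing: the letters of \<open>x\<close> at offsets
  \<open>\<plusminus>n\<close> from the times in \<open>K (Suc n)\<close> are constant.\<close>
lemma exists_omega_limit_point: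
  fixes x :: "int \<Rightarrow> 'a::finite"
  obtains z where "\<And>n. \<exists>k\<ge>n. \<forall>i. \<bar>i\<bar> \<le> int n \<longrightarrow> z i = x (i + int k)"
proof -
  define pair where "pair n k = (x (int k + int n), x (int k - int n))" for n k
  have "\<forall>n K. \<exists>K'. infinite K \<longrightarrow> K' \<subseteq> K \<and> infinite K' \<and> (\<exists>c. \<forall>k\<in>K'. pair n k = c)"
    by (metis infinite_subset_constant)
  then obtain R where R: "\<And>n K. infinite K \<Longrightarrow>
      R n K \<subseteq> K \<and> infinite (R n K) \<and> (\<exists>c. \<forall>k\<in>R n K. pair n k = c)"
    by metis
  define K where "K = rec_nat UNIV R"
  have K_Suc: "K (Suc n) = R n (K n)" for n by (simp add: K_def)
  have K_infinite: "infinite (K n)" for n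
    by (induction n) (simp_all add: K_def R)
  have K_antimono: "m \<le> n \<Longrightarrow> K n \<subseteq> K m" for m n
    by (rule lift_Suc_antimono_le) (use K_Suc R K_infinite in auto)
  have K_constant: "x (i + int k) = x (i + int k')"
    if "k \<in> K (Suc (nat \<bar>i\<bar>))" "k' \<in> K (Suc (nat \<bar>i\<bar>))" for i k k'
  proof -
    from R[OF K_infinite] that have "pair (nat \<bar>i\<bar>) k = pair (nat \<bar>i\<bar>) k'"
      unfolding K_Suc by metis
    then show ?thesis by (cases "i \<ge> 0") (auto simp: pair_def algebra_simps)
  qed
  define z where "z i = x (i + int (SOME k. k \<in> K (Suc (nat \<bar>i\<bar>))))" for i
  have "\<exists>k\<ge>n. \<forall>i. \<bar>i\<bar> \<le> int n \<longrightarrow> z i = x (i + int k)" for n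
  proof -
    obtain k where k: "k \<ge> n" "k \<in> K (Suc n)"
      using K_infinite unfolding infinite_nat_iff_unbounded_le by blast
    have "z i = x (i + int k)" if "\<bar>i\<bar> \<le> int n" for i
    proof -
      have "Suc (nat \<bar>i\<bar>) \<le> Suc n" using that by linarith
      then have "k \<in> K (Suc (nat \<bar>i\<bar>))" using k(2) K_antimono by blast
      moreover have "(SOME k. k \<in> K (Suc (nat \<bar>i\<bar>))) \<in> K (Suc (nat \<bar>i\<bar>))"
        using \<open>k \<in> K (Suc (nat \<bar>i\<bar>))\<close> by (rule someI)
      ultimately show ?thesis unfolding z_def by (metis K_constant)
    qed
    then show ?thesis using k(1) by blast
  qed
  then show ?thesis using that by blast
qed

lemma shift_invariant_shift_by:
  assumes "shift_invariant X" "x \<in> X"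
  shows "(\<lambda>i. x (i + k)) \<in> X"
proof (induction k rule: int_induct[where k = 0])
  case base
  then show ?case using assms(2) by simp
next
  case (step1 k)
  then have "shift (\<lambda>i. x (i + k)) \<in> X"
    using assms(1) unfolding shift_invariant_def by blast
  then show ?case by (simp add: shift_def ac_simps)
next
  case (step2 k)
  then obtain y where "y \<in> X" "(\<lambda>i. x (i + k)) = shift y"
    using assms(1) unfolding shift_invariant_def by (metis imageE)
  moreover have "y = (\<lambda>i. x (i + (k - 1)))"
  proof
    fix j
    have "x (j - 1 + k) = shift y (j - 1)" using \<open>(\<lambda>i. x (i + k)) = shift y\<close> by metis
    then show "y j = x (j + (k - 1))" by (simp add: shift_def algebra_simps)
  qed
  ultimately show ?case by simp
qed

lemma closed_seqs_mem_of_approximable: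
  assumes "closed_seqs X" "shift_invariant X" "x \<in> X"
    and "\<And>n. \<exists>k. \<forall>i. \<bar>i\<bar> \<le> int n \<longrightarrow> z i = x (i + k)"
  shows "z \<in> X"
proof (rule ccontr)
  assume "z \<notin> X"
  then obtain n where n: "\<forall>y. (\<forall>i. \<bar>i\<bar> \<le> int n \<longrightarrow> y i = z i) \<longrightarrow> y \<notin> X"
    using assms(1) unfolding closed_seqs_def by blast
  obtain k where "\<forall>i. \<bar>i\<bar> \<le> int n \<longrightarrow> z i = x (i + k)" using assms(4) by blast
  with n have "(\<lambda>i. x (i + k)) \<notin> X" by auto
  with shift_invariant_shift_by[OF assms(2,3)] show False by blast
qed

lemma closed_seqs_restrict_letters:
  assumes "closed_seqs X"
  shows "closed_seqs {y\<in>X. \<forall>i. y i \<in> S}"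
  unfolding closed_seqs_def
proof (intro allI impI)
  fix y assume "y \<notin> {y\<in>X. \<forall>i. y i \<in> S}"
  then consider "y \<notin> X" | i where "y i \<notin> S" by blast
  then show "\<exists>n::nat. \<forall>y'. (\<forall>i. \<bar>i\<bar> \<le> int n \<longrightarrow> y' i = y i) \<longrightarrow> y' \<notin> {y\<in>X. \<forall>i. y i \<in> S}"
  proof cases
    case 1
    then show ?thesis using assms unfolding closed_seqs_def by blast
  next
    case (2 i)
    show ?thesis
    proof (intro exI[of _ "nat \<bar>i\<bar>"] allI impI)
      fix y' assume "\<forall>j. \<bar>j\<bar> \<le> int (nat \<bar>i\<bar>) \<longrightarrow> y' j = y j"
      then have "y' i = y i" by simp
      with 2 show "y' \<notin> {y\<in>X. \<forall>i. y i \<in> S}" by (metis (mono_tags, lifting) mem_Collect_eq)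
    qed
  qed
qed

lemma shift_invariant_restrict_letters:
  assumes "shift_invariant X"
  shows "shift_invariant {y\<in>X. \<forall>i. y i \<in> S}"
  unfolding shift_invariant_def
proof (intro equalityI subsetI)
  fix y assume "y \<in> shift ` {y\<in>X. \<forall>i. y i \<in> S}"
  then show "y \<in> {y\<in>X. \<forall>i. y i \<in> S}"
    using assms unfolding shift_invariant_def by (auto simp: shift_def)
next
  fix y assume y: "y \<in> {y\<in>X. \<forall>i. y i \<in> S}"
  have "(\<lambda>i. y (i + - 1)) \<in> X" using y shift_invariant_shift_by[OF assms] by blast
  with y have "(\<lambda>i. y (i - 1)) \<in> {y\<in>X. \<forall>i. y i \<in> S}" by simp
  moreover have "y = shift (\<lambda>i. y (i - 1))" by (simp add: shift_def)
  ultimately show "y \<in> shift ` {y\<in>X. \<forall>i. y i \<in> S}" by blast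
qed

lemma singleton_in_language_iff: "[a] \<in> language X \<longleftrightarrow> (\<exists>x\<in>X. \<exists>i. x i = a)"
  by (auto simp: language_def upt_rec)

lemma pair_in_language_iff: "[a, b] \<in> language X \<longleftrightarrow> (\<exists>x\<in>X. \<exists>i. x i = a \<and> x (i + 1) = b)"
  by (auto simp: language_def numeral_2_eq_2 upt_rec)

lemma shift_space_has_successor:
  assumes "shift_space X"
  obtains b where "[a, b] \<in> language X"
  using assms unfolding shift_space_def singleton_in_language_iff pair_in_language_iff by blast

lemma shift_space_has_predecessor:
  assumes "shift_space X"
  obtains a where "[a, b] \<in> language X"
proof -
  obtain x i where "x \<in> X" "x i = b"
    using assms unfolding shift_space_def singleton_in_language_iff by blast
  then have "[x (i - 1), b] \<in> language X" unfolding pair_in_language_iff by force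
  then show ?thesis by (rule that)
qed

lemma forward_orbit_limit_point:
  fixes X :: "(int \<Rightarrow> 'a::finite) set"
  assumes "closed_seqs X" "shift_invariant X" "x \<in> X" and x_forward: "\<And>j. x (int j) \<in> S"
  obtains z where "z \<in> X" "\<forall>i. z i \<in> S"
proof -
  obtain z where z: "\<And>n. \<exists>k\<ge>n. \<forall>i. \<bar>i\<bar> \<le> int n \<longrightarrow> z i = x (i + int k)"
    using exists_omega_limit_point by blast
  have "z \<in> X"
  proof (rule closed_seqs_mem_of_approximable[OF assms(1-3)])
    fix n
    obtain k where "\<forall>i. \<bar>i\<bar> \<le> int n \<longrightarrow> z i = x (i + int k)" using z by blast
    then show "\<exists>k. \<forall>i. \<bar>i\<bar> \<le> int n \<longrightarrow> z i = x (i + k)" by blast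
  qed
  moreover have "\<forall>i. z i \<in> S"
  proof
    fix i
    obtain k where "k \<ge> nat \<bar>i\<bar>" "z i = x (i + int k)" using z[of "nat \<bar>i\<bar>"] by auto
    moreover from this(1) have "0 \<le> i + int k" by linarith
    ultimately show "z i \<in> S" using x_forward[of "nat (i + int k)"] by simp
  qed
  ultimately show ?thesis by (rule that)
qed

text \<open>The points of \<open>X\<close> with all letters in \<open>S\<close> form a subshift, nonempty by compactness.\<close>
lemma minimal_shift_successor_closed_eq_UNIV:
  fixes X :: "(int \<Rightarrow> 'a::finite) set"
  assumes minimal: "minimal_shift X" and "a \<in> S"
    and closed: "\<And>a b. a \<in> S \<Longrightarrow> [a, b] \<in> language X \<Longrightarrow> b \<in> S"
  shows "S = UNIV"
proof -
  have X: "shift_space X" "closed_seqs X" "shift_invariant X"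
    using minimal by (auto simp: minimal_shift_def shift_space_def)
  obtain y i where "y \<in> X" "y i = a"
    using X(1) unfolding shift_space_def singleton_in_language_iff by blast
  define x where "x = (\<lambda>j. y (j + i))"
  have x: "x \<in> X" unfolding x_def using shift_invariant_shift_by[OF X(3) \<open>y \<in> X\<close>] .
  have x_forward: "x (int j) \<in> S" for j
  proof (induction j)
    case 0
    then show ?case using \<open>a \<in> S\<close> \<open>y i = a\<close> by (simp add: x_def)
  next
    case (Suc j)
    have "[x (int j), x (int j + 1)] \<in> language X"
      using x unfolding pair_in_language_iff by blast
    with Suc have "x (int j + 1) \<in> S" by (rule closed)
    then show ?case by (simp add: add.commute)
  qed
  obtain z where "z \<in> X" "\<forall>i. z i \<in> S"
    using forward_orbit_limit_point[OF X(2,3) x x_forward] by blast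
  then have "{y\<in>X. \<forall>i. y i \<in> S} \<noteq> {}" by blast
  moreover have "Y \<subseteq> X \<Longrightarrow> Y \<noteq> {} \<Longrightarrow> closed_seqs Y \<Longrightarrow> shift_invariant Y \<Longrightarrow> Y = X" for Y
    using minimal unfolding minimal_shift_def by blast
  ultimately have restrict_eq: "{y\<in>X. \<forall>i. y i \<in> S} = X"
    using closed_seqs_restrict_letters[OF X(2)] shift_invariant_restrict_letters[OF X(3)]
    by (metis (no_types, lifting) mem_Collect_eq subsetI)
  have "c \<in> S" for c
  proof -
    obtain y i where "y \<in> X" "y i = c"
      using X(1) unfolding shift_space_def singleton_in_language_iff by blast
    with restrict_eq show "c \<in> S" by blast
  qed
  then show ?thesis by blast
qed

lemma functional_surjective_rel_injective:
  fixes R :: "'a::finite \<Rightarrow> 'a \<Rightarrow> bool"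
  assumes total: "\<And>a. \<exists>b. R a b" and surjective: "\<And>b. \<exists>a. R a b"
    and functional: "\<And>a b b'. R a b \<Longrightarrow> R a b' \<Longrightarrow> b = b'"
    and "R a b" "R a' b"
  shows "a = a'"
proof -
  define f where "f a = (SOME b. R a b)" for a
  have f: "R a (f a)" for a
    unfolding f_def using total[of a] by (rule someI_ex)
  have f_eq: "R a b \<Longrightarrow> f a = b" for a b
    using functional f by blast
  have "b \<in> range f" for b
  proof -
    obtain a where "R a b" using surjective by blast
    then show ?thesis using f_eq by blast
  qed
  then have "surj f" by blast
  then have "inj f" by (simp add: finite_UNIV_surj_inj)
  moreover have "f a = f a'" using assms(4,5) f_eq by simp
  ultimately show ?thesis by (rule injD)
qed

lemma left_special_letter_iff:
  fixes X :: "(int \<Rightarrow> 'a::finite) set"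
  shows "left_special X [b] \<longleftrightarrow> (\<exists>a a'. a \<noteq> a' \<and> [a, b] \<in> language X \<and> [a', b] \<in> language X)"
  unfolding left_special_def ext_left_def by (subst two_le_card_iff) auto

lemma right_special_letter_iff:
  fixes X :: "(int \<Rightarrow> 'a::finite) set"
  shows "right_special X [a] \<longleftrightarrow> (\<exists>b b'. b \<noteq> b' \<and> [a, b] \<in> language X \<and> [a, b'] \<in> language X)"
  unfolding right_special_def ext_right_def by (subst two_le_card_iff) auto

lemma no_right_special_letter_imp_not_left_special:
  fixes X :: "(int \<Rightarrow> 'a::finite) set"
  assumes X: "shift_space X" and no_right_special: "\<forall>a. \<not> right_special X [a]"
  shows "\<not> left_special X [b]"
proof
  assume "left_special X [b]"
  then obtain a a' where "a \<noteq> a'" "[a, b] \<in> language X" "[a', b] \<in> language X"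
    unfolding left_special_letter_iff by blast
  moreover have "a = a'"
  proof (rule functional_surjective_rel_injective[of "\<lambda>a b. [a, b] \<in> language X"])
    show "\<exists>b. [a, b] \<in> language X" for a by (meson X shift_space_has_successor)
    show "\<exists>a. [a, b] \<in> language X" for b by (meson X shift_space_has_predecessor)
    show "b = b'" if "[a, b] \<in> language X" "[a, b'] \<in> language X" for a b b'
      using that no_right_special unfolding right_special_letter_iff by blast
  qed fact+
  ultimately show False by blast
qed

lemma no_left_special_letter_imp_not_right_special:
  fixes X :: "(int \<Rightarrow> 'a::finite) set"
  assumes X: "shift_space X" and no_left_special: "\<forall>b. \<not> left_special X [b]"
  shows "\<not> right_special X [a]"
proof
  assume "right_special X [a]"
  then obtain b b' where "b \<noteq> b'" "[a, b] \<in> language X" "[a, b'] \<in> language X"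
    unfolding right_special_letter_iff by blast
  moreover have "b = b'"
  proof (rule functional_surjective_rel_injective[of "\<lambda>b a. [a, b] \<in> language X"])
    show "\<exists>a. [a, b] \<in> language X" for b by (meson X shift_space_has_predecessor)
    show "\<exists>b. [a, b] \<in> language X" for a by (meson X shift_space_has_successor)
    show "a = a'" if "[a, b] \<in> language X" "[a', b] \<in> language X" for a a' b
      using that no_left_special unfolding left_special_letter_iff by blast
  qed fact+
  ultimately show False by blast
qed

text \<open>Otherwise \<open>a\<^sup>L\<close> and \<open>b\<^sup>R\<close> would form a connected component of the extension graph,
  which has at least four vertices.\<close>
lemma ext_graph_connected_pair_special:
  fixes X :: "(int \<Rightarrow> 'a::finite) set"
  assumes "shift_space X" "card (UNIV :: 'a set) \<ge> 2" "ext_graph_connected X []"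
    and ab: "[a, b] \<in> language X"
  shows "right_special X [a] \<or> left_special X [b]"
proof (rule ccontr)
  assume "\<not> ?thesis"
  then have unique_succ: "\<And>b'. [a, b'] \<in> language X \<Longrightarrow> b' = b"
    and unique_pred: "\<And>a'. [a', b] \<in> language X \<Longrightarrow> a' = a"
    using ab unfolding left_special_letter_iff right_special_letter_iff by blast+
  obtain c :: 'a where "c \<noteq> a"
  proof -
    obtain x y :: 'a where "x \<noteq> y" using assms(2) two_le_card_iff[of "UNIV :: 'a set"] by auto
    then show ?thesis using that[of x] that[of y] by blast
  qed
  have "ext_left X [] = UNIV" "ext_right X [] = UNIV"
    using assms(1) by (auto simp: shift_space_def ext_left_def ext_right_def)
  then have "Inl a \<in> ext_graph_vertices X []" "Inl c \<in> ext_graph_vertices X []"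
    by (auto simp: ext_graph_vertices_def)
  then have "(Inl a, Inl c) \<in> (ext_graph_edges X [])\<^sup>*"
    using assms(3) unfolding ext_graph_connected_def by blast
  then have "Inl c \<in> {Inl a, Inr b}"
  proof (induction rule: rtrancl_induct)
    case base
    then show ?case by simp
  next
    case (step v w)
    then show ?case using unique_succ unique_pred by (auto simp: ext_graph_edges_def)
  qed
  with \<open>c \<noteq> a\<close> show False by simp
qed

theorem mainTheorem13:
  fixes X :: "(int \<Rightarrow> 'a::finite) set"
  assumes "card (UNIV :: 'a set) \<ge> 2"
    and "minimal_shift X"
    and "ext_graph_connected X []"
  shows "\<exists>a. left_special X [a] \<and> right_special X [a]"
proof (rule ccontr)
  assume no_bispecial: "\<not> ?thesis"
  have X: "shift_space X" using assms(2) by (simp add: minimal_shift_def)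
  note pair_special = ext_graph_connected_pair_special[OF X assms(1,3)]
  obtain a b where "[a, b] \<in> language X" using shift_space_has_successor[OF X] by metis
  then obtain c where "left_special X [c]"
    using pair_special no_left_special_letter_imp_not_right_special[OF X] by blast
  have "{c. left_special X [c]} = UNIV"
  proof (rule minimal_shift_successor_closed_eq_UNIV[OF assms(2)])
    show "c \<in> {c. left_special X [c]}" using \<open>left_special X [c]\<close> by simp
    show "b \<in> {c. left_special X [c]}" if "a \<in> {c. left_special X [c]}" "[a, b] \<in> language X" for a b
      using that pair_special no_bispecial by blast
  qed
  then have "\<forall>a. \<not> right_special X [a]" using no_bispecial by blast
  then show False
    using no_right_special_letter_imp_not_left_special[OF X] \<open>left_special X [c]\<close> by blast
qed

end
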